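(* Let $K\ge2$, $0<q<p$ with $p+(K-1)q=1$, $\phi\in\Delta$ with $\phi_1\le\cdots\le\phi_K$, and $n\in\{0,\dots,K-1\}$. Let $g(n)=(1-nq)\phi_{n+1}-q\sum_{i>n}\phi_i$. Then: (a) $\theta^{[n]}\in\Delta$ if and only if $g(n)\ge0$; (b) for $n>0$, if $\theta^{[n-1]}\in\Delta$ then $\theta^{[n]}\in\Delta$; (c) for $n>0$, if $\theta^{[n-1]}\in\Delta$ then $\lambda^{[n-1]}\ge\lambda^{[n]}$; (d) for $n>0$, if $\phi_{n+1}=\phi_n$ then $g(n)=g(n-1)$; (e) for $n>0$, if $g(n-1)=0$ then $\theta^{[n-1]}=\theta^{[n]}$.
   Context: $\Delta=\{\theta\in\mathbb{R}^K:\theta_i\ge0,\sum_i\theta_i=1\}$. For sorted $\phi$ and $n\in\{0,\dots,K-1\}$: $\lambda^{[n]}=\frac{(p-q)\sum_{i>n}\phi_i}{1-nq}$, and $\theta^{[n]}\in\mathbb{R}^K$ is given by $\theta^{[n]}_i=0$ for $i\le n$ and $\theta^{[n]}_i=\frac{\phi_i}{\lambda^{[n]}}-\frac{q}{p-q}$ for $i>n$ (its entries sum to 1 but may be negative). *)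

theory Defs
  imports Complex_Main
begin

text \<open>Vectors in R^K are represented as functions nat => real, indexed by 1..K
  (values outside 1..K are irrelevant).\<close>

definition simplex :: "nat \<Rightarrow> (nat \<Rightarrow> real) \<Rightarrow> bool" where
  "simplex K \<theta> \<longleftrightarrow> (\<forall>i\<in>{1..K}. \<theta> i \<ge> 0) \<and> (\<Sum>i=1..K. \<theta> i) = 1"

definition lam :: "real \<Rightarrow> real \<Rightarrow> nat \<Rightarrow> (nat \<Rightarrow> real) \<Rightarrow> nat \<Rightarrow> real" where
  "lam p q K \<phi> n = (p - q) * (\<Sum>i=n+1..K. \<phi> i) / (1 - real n * q)"

definition theta :: "real \<Rightarrow> real \<Rightarrow> nat \<Rightarrow> (nat \<Rightarrow> real) \<Rightarrow> nat \<Rightarrow> nat \<Rightarrow> real" where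
  "theta p q K \<phi> n i = (if i \<le> n then 0 else \<phi> i / lam p q K \<phi> n - q / (p - q))"

definition gfun :: "real \<Rightarrow> nat \<Rightarrow> (nat \<Rightarrow> real) \<Rightarrow> nat \<Rightarrow> real" where
  "gfun q K \<phi> n = (1 - real n * q) * \<phi> (n + 1) - q * (\<Sum>i=n+1..K. \<phi> i)"

end

theory Submission
  imports Defs
begin

text \<open>Write \<open>S m = \<Sum>i>m. \<phi> i\<close> and \<open>c m = 1 - m q\<close>. For \<open>i > m\<close> the \<open>i\<close>-th entry of
  \<open>\<theta>[m]\<close> is \<open>(c m \<phi> i - q S m) / ((p - q) S m)\<close>; as \<open>\<phi>\<close> is sorted, the smallest of these is
  the entry \<open>m + 1\<close>, namely \<open>g m / ((p - q) S m)\<close>, which gives (a). Splitting off the first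
  term \<open>S m = \<phi> (m + 1) + S (m + 1)\<close> shows \<open>g m = c (m + 1) \<phi> (m + 1) - q S (m + 1)\<close>, which
  is \<open>g (m + 1)\<close> with \<open>\<phi> (m + 2)\<close> replaced by \<open>\<phi> (m + 1)\<close>; this gives (b) and (d). The same
  splitting yields \<open>\<lambda>[m] - \<lambda>[m + 1] = (p - q) g m / (c m c (m + 1))\<close>, whence (c), and (e)
  since moreover the entry \<open>m + 1\<close> of \<open>\<theta>[m]\<close> vanishes when \<open>g m = 0\<close>.\<close>

lemma tail_sum_pos:
  fixes \<phi> :: "nat \<Rightarrow> real"
  assumes "simplex K \<phi>" and "mono_on {1..K} \<phi>" and "m < K"
  shows "0 < (\<Sum>i=m+1..K. \<phi> i)"
proof -
  have nonneg: "\<And>i. i \<in> {1..K} \<Longrightarrow> 0 \<le> \<phi> i" and sum1: "(\<Sum>i=1..K. \<phi> i) = 1"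
    using assms(1) unfolding simplex_def by auto
  have "1 \<le> (\<Sum>i=1..K. \<phi> K)"
    unfolding sum1[symmetric] by (rule sum_mono) (use assms(2) in \<open>auto simp: mono_on_def\<close>)
  then have "1 \<le> real K * \<phi> K" by simp
  then have "0 < \<phi> K"
    using mult_nonneg_nonpos[of "real K" "\<phi> K"] by linarith
  also have "\<phi> K \<le> (\<Sum>i=m+1..K. \<phi> i)"
    by (rule member_le_sum) (use assms(3) nonneg in auto)
  finally show ?thesis .
qed

lemma one_minus_mult_pos:
  fixes p q :: real
  assumes "0 \<le> q" and "0 < p" and "p + real (K - 1) * q = 1" and "m < K"
  shows "0 < 1 - real m * q"
proof -
  have "real m * q \<le> real (K - 1) * q"
    using assms(1,4) by (intro mult_right_mono) auto
  then show ?thesis using assms(2,3) by linarith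
qed

lemma sum_theta:
  assumes "p + real (K - 1) * q = 1" and "p \<noteq> q" and "m < K"
    and "(\<Sum>i=m+1..K. \<phi> i) \<noteq> 0" and "1 - real m * q \<noteq> 0"
  shows "(\<Sum>i=1..K. theta p q K \<phi> m i) = 1"
proof -
  define S where "S = (\<Sum>i=m+1..K. \<phi> i)"
  have "(\<Sum>i=1..K. theta p q K \<phi> m i) = (\<Sum>i=m+1..K. \<phi> i / lam p q K \<phi> m - q / (p - q))"
    by (rule sum.mono_neutral_cong_right) (auto simp: theta_def)
  also have "\<dots> = S / lam p q K \<phi> m - real (K - m) * (q / (p - q))"
    by (simp add: sum_subtractf sum_divide_distrib S_def)
  also have "\<dots> = ((1 - real m * q) - (real K - real m) * q) / (p - q)"
    using assms(2-5) unfolding lam_def S_def[symmetric] by (simp add: diff_divide_distrib)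
  also have "\<dots> = 1"
    using assms(1-3) by (simp add: field_simps)
  finally show ?thesis .
qed

lemma theta_above:
  assumes "m < i" and "p \<noteq> q" and "(\<Sum>i=m+1..K. \<phi> i) \<noteq> 0"
  shows "theta p q K \<phi> m i
    = ((1 - real m * q) * \<phi> i - q * (\<Sum>i=m+1..K. \<phi> i)) / ((p - q) * (\<Sum>i=m+1..K. \<phi> i))"
proof -
  have "\<phi> i / lam p q K \<phi> m = (1 - real m * q) * \<phi> i / ((p - q) * (\<Sum>i=m+1..K. \<phi> i))"
    by (simp add: lam_def)
  moreover have "q / (p - q) = q * (\<Sum>i=m+1..K. \<phi> i) / ((p - q) * (\<Sum>i=m+1..K. \<phi> i))"
    using assms(3) by simp
  ultimately show ?thesis
    using assms(1) by (simp add: theta_def diff_divide_distrib)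
qed

lemma theta_Suc:
  assumes "p \<noteq> q" and "(\<Sum>i=m+1..K. \<phi> i) \<noteq> 0"
  shows "theta p q K \<phi> m (Suc m) = gfun q K \<phi> m / ((p - q) * (\<Sum>i=m+1..K. \<phi> i))"
  using theta_above[OF _ assms] by (simp add: gfun_def)

lemma simplex_theta_iff:
  assumes "p + real (K - 1) * q = 1" and "q < p" and "m < K" and "mono_on {1..K} \<phi>"
    and S_pos: "0 < (\<Sum>i=m+1..K. \<phi> i)" and c_pos: "0 < 1 - real m * q"
  shows "simplex K (theta p q K \<phi> m) \<longleftrightarrow> 0 \<le> gfun q K \<phi> m"
proof -
  let ?S = "\<Sum>i=m+1..K. \<phi> i"
  have denom_pos: "0 < (p - q) * ?S" using assms(2) S_pos by simp
  show ?thesis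
  proof
    assume "simplex K (theta p q K \<phi> m)"
    then have "0 \<le> theta p q K \<phi> m (Suc m)" using assms(3) unfolding simplex_def by auto
    then show "0 \<le> gfun q K \<phi> m"
      using assms(2) S_pos denom_pos by (metis theta_Suc less_irrefl pos_le_divide_eq mult_zero_left)
  next
    assume g_nonneg: "0 \<le> gfun q K \<phi> m"
    have "0 \<le> theta p q K \<phi> m i" if "i \<in> {1..K}" for i
    proof (cases "i \<le> m")
      case False
      then have "\<phi> (Suc m) \<le> \<phi> i" using assms(4) that by (auto simp: mono_on_def)
      then have "gfun q K \<phi> m \<le> (1 - real m * q) * \<phi> i - q * ?S"
        using c_pos by (simp add: gfun_def mult_left_mono)
      with False g_nonneg denom_pos assms(2) S_pos show ?thesis
        by (simp add: theta_above)
    qed (simp add: theta_def)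
    moreover have "(\<Sum>i=1..K. theta p q K \<phi> m i) = 1"
      using assms S_pos c_pos by (intro sum_theta) auto
    ultimately show "simplex K (theta p q K \<phi> m)" unfolding simplex_def by blast
  qed
qed

lemma tail_sum_split:
  "m < K \<Longrightarrow> (\<Sum>i=m+1..K. \<phi> i) = \<phi> (Suc m) + (\<Sum>i=m+2..K. \<phi> i)"
  by (simp add: sum.atLeast_Suc_atMost)

lemma gfun_split:
  assumes "m < K"
  shows "gfun q K \<phi> m = (1 - real (Suc m) * q) * \<phi> (Suc m) - q * (\<Sum>i=m+2..K. \<phi> i)"
  using tail_sum_split[OF assms, of \<phi>] by (simp add: gfun_def algebra_simps)

lemma gfun_le_gfun_Suc:
  assumes "m < K" and "\<phi> (Suc m) \<le> \<phi> (Suc (Suc m))" and "0 \<le> 1 - real (Suc m) * q"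
  shows "gfun q K \<phi> m \<le> gfun q K \<phi> (Suc m)"
proof -
  have "gfun q K \<phi> m = (1 - real (Suc m) * q) * \<phi> (Suc m) - q * (\<Sum>i=m+2..K. \<phi> i)"
    using assms(1) by (rule gfun_split)
  also have "\<dots> \<le> (1 - real (Suc m) * q) * \<phi> (Suc (Suc m)) - q * (\<Sum>i=m+2..K. \<phi> i)"
    using assms(2,3) by (simp add: mult_left_mono)
  also have "\<dots> = gfun q K \<phi> (Suc m)" by (simp add: gfun_def)
  finally show ?thesis .
qed

lemma gfun_Suc_eq:
  assumes "m < K" and "\<phi> (Suc (Suc m)) = \<phi> (Suc m)"
  shows "gfun q K \<phi> (Suc m) = gfun q K \<phi> m"
  using assms(2) by (simp add: gfun_split[OF assms(1)] gfun_def[of q K \<phi> "Suc m"])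

lemma lam_diff:
  assumes "m < K" and "1 - real m * q \<noteq> 0" and "1 - real (Suc m) * q \<noteq> 0"
  shows "lam p q K \<phi> m - lam p q K \<phi> (Suc m)
    = (p - q) * gfun q K \<phi> m / ((1 - real m * q) * (1 - real (Suc m) * q))"
  using tail_sum_split[OF assms(1), of \<phi>] assms(2,3)
  by (simp add: lam_def gfun_split[OF assms(1)] field_simps)

lemma lam_Suc_le:
  assumes "m < K" and "q < p" and "0 < 1 - real m * q" and "0 < 1 - real (Suc m) * q"
    and "0 \<le> gfun q K \<phi> m"
  shows "lam p q K \<phi> (Suc m) \<le> lam p q K \<phi> m"
proof -
  have "0 \<le> (p - q) * gfun q K \<phi> m / ((1 - real m * q) * (1 - real (Suc m) * q))"
    using assms(2-5) by (intro divide_nonneg_pos mult_nonneg_nonneg mult_pos_pos) auto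
  then show ?thesis using lam_diff[of m K q p \<phi>] assms(1,3,4) by linarith
qed

lemma theta_Suc_eq_if_gfun_zero:
  assumes "m < K" and "p \<noteq> q" and "(\<Sum>i=m+1..K. \<phi> i) \<noteq> 0"
    and "1 - real m * q \<noteq> 0" and "1 - real (Suc m) * q \<noteq> 0" and "gfun q K \<phi> m = 0"
  shows "theta p q K \<phi> (Suc m) = theta p q K \<phi> m"
proof
  fix i
  have "lam p q K \<phi> m = lam p q K \<phi> (Suc m)"
    using lam_diff[OF assms(1,4,5), of p \<phi>] assms(6) by simp
  moreover have "theta p q K \<phi> m (Suc m) = 0"
    using theta_Suc[OF assms(2,3)] assms(6) by simp
  ultimately show "theta p q K \<phi> (Suc m) i = theta p q K \<phi> m i"
    by (cases "i \<le> m"; cases "i = Suc m") (auto simp: theta_def)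
qed

theorem lemma3:
  fixes K n :: nat and p q :: real and \<phi> :: "nat \<Rightarrow> real"
  assumes "K \<ge> 2" and "0 < q" and "q < p" and "p + real (K - 1) * q = 1"
    and "simplex K \<phi>"
    and "\<forall>i j. 1 \<le> i \<longrightarrow> i \<le> j \<longrightarrow> j \<le> K \<longrightarrow> \<phi> i \<le> \<phi> j"
    and "n < K"
  shows "(simplex K (theta p q K \<phi> n) \<longleftrightarrow> gfun q K \<phi> n \<ge> 0)
    \<and> (n > 0 \<longrightarrow> simplex K (theta p q K \<phi> (n - 1)) \<longrightarrow> simplex K (theta p q K \<phi> n))
    \<and> (n > 0 \<longrightarrow> simplex K (theta p q K \<phi> (n - 1)) \<longrightarrow> lam p q K \<phi> (n - 1) \<ge> lam p q K \<phi> n)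
    \<and> (n > 0 \<longrightarrow> \<phi> (n + 1) = \<phi> n \<longrightarrow> gfun q K \<phi> n = gfun q K \<phi> (n - 1))
    \<and> (n > 0 \<longrightarrow> gfun q K \<phi> (n - 1) = 0 \<longrightarrow>
         (\<forall>i\<in>{1..K}. theta p q K \<phi> (n - 1) i = theta p q K \<phi> n i))"
proof -
  have mono: "mono_on {1..K} \<phi>" using assms(6) by (auto simp: mono_on_def)
  have S_pos: "0 < (\<Sum>i=m+1..K. \<phi> i)" and c_pos: "0 < 1 - real m * q" if "m < K" for m
    using tail_sum_pos[OF assms(5) mono that] one_minus_mult_pos[of q p K m] assms(2-4) that
    by auto
  have simplex_iff: "simplex K (theta p q K \<phi> m) \<longleftrightarrow> 0 \<le> gfun q K \<phi> m" if "m < K" for m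
    using that assms(3,4) mono S_pos c_pos by (intro simplex_theta_iff) auto
  show ?thesis
  proof (cases n)
    case 0
    with simplex_iff assms(7) show ?thesis by simp
  next
    case (Suc m)
    with assms(7) have m: "m < K" and Suc_m: "Suc m < K" by simp_all
    have "gfun q K \<phi> m \<le> gfun q K \<phi> (Suc m)"
      using assms(6) c_pos[OF Suc_m] Suc_m by (intro gfun_le_gfun_Suc) auto
    then show ?thesis
      using Suc m assms(3) simplex_iff[OF m] simplex_iff[OF Suc_m] S_pos[OF m] c_pos[OF m]
        c_pos[OF Suc_m] lam_Suc_le[of m K q p] theta_Suc_eq_if_gfun_zero[of m K p q]
        gfun_Suc_eq[OF m]
      by auto
  qed
qed

end
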